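(* Let $N\ge2$, $d\ge1$, $1\le p\le q\le\infty$, and let $S\subset\mathbb{Z}_N^d$ be a nonempty set for which a $(p,q)$-restriction estimate holds with constant $C_{p,q}>0$. Let $f:\mathbb{Z}_N^d\to\mathbb{C}$ be supported in $E\subset\mathbb{Z}_N^d$, and suppose $$|E|^{1/p}\cdot|S|<\frac{N^d}{2^{1/p}C_{p,q}}.$$ Then $f$ is uniquely determined by the values $\hat f(m)$, $m\notin S$, among signals with at most $|E|$ nonzero entries: if $g:\mathbb{Z}_N^d\to\mathbb{C}$ satisfies $|\{x:g(x)\ne0\}|\le|E|$ and $\hat g(m)=\hat f(m)$ for all $m\notin S$, then $g=f$.
   Context: $\chi(t)=e^{2\pi i t/N}$, $\hat f(m)=N^{-d}\sum_{x\in\mathbb{Z}_N^d}\chi(-x\cdot m)f(x)$. A $(p,q)$-restriction estimate holds for a nonempty $S\subset\mathbb{Z}_N^d$ with constant $C_{p,q}$ if for every $h:\mathbb{Z}_N^d\to\mathbb{C}$, $\big(\frac{1}{|S|}\sum_{m\in S}|\hat h(m)|^q\big)^{1/q}\le C_{p,q}N^{-d}\big(\sum_x|h(x)|^p\big)^{1/p}$ (for $q=\infty$ the left side is $\max_{m\in S}|\hat h(m)|$). The set $S$ is the set of unobserved frequencies. *)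

theory Defs
  imports "HOL-Analysis.Analysis"
begin

text \<open>Points of Z_N^d are represented by functions x :: nat => nat with
  x i < N for i < d and x i = 0 for i >= d (canonical representatives).\<close>

definition ZNd :: "nat \<Rightarrow> nat \<Rightarrow> (nat \<Rightarrow> nat) set" where
  "ZNd N d = {x. (\<forall>i<d. x i < N) \<and> (\<forall>i\<ge>d. x i = 0)}"

definition dotp :: "nat \<Rightarrow> (nat \<Rightarrow> nat) \<Rightarrow> (nat \<Rightarrow> nat) \<Rightarrow> int" where
  "dotp d x m = (\<Sum>i<d. int (x i) * int (m i))"

definition chi :: "nat \<Rightarrow> int \<Rightarrow> complex" where
  "chi N t = exp (2 * of_real pi * \<i> * of_int t / of_nat N)"

definition fourier :: "nat \<Rightarrow> nat \<Rightarrow> ((nat \<Rightarrow> nat) \<Rightarrow> complex) \<Rightarrow> (nat \<Rightarrow> nat) \<Rightarrow> complex" where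
  "fourier N d f m = (1 / of_nat N ^ d) * (\<Sum>x\<in>ZNd N d. chi N (- dotp d x m) * f x)"

definition lp_norm :: "ereal \<Rightarrow> ('a \<Rightarrow> complex) \<Rightarrow> 'a set \<Rightarrow> real" where
  "lp_norm p h A = (if p = \<infinity> then Max ((\<lambda>x. cmod (h x)) ` A)
     else (\<Sum>x\<in>A. cmod (h x) powr real_of_ereal p) powr (1 / real_of_ereal p))"

definition avg_norm :: "ereal \<Rightarrow> ('a \<Rightarrow> complex) \<Rightarrow> 'a set \<Rightarrow> real" where
  "avg_norm q h A = (if q = \<infinity> then Max ((\<lambda>x. cmod (h x)) ` A)
     else ((1 / real (card A)) * (\<Sum>x\<in>A. cmod (h x) powr real_of_ereal q)) powr (1 / real_of_ereal q))"

definition inv_exp :: "ereal \<Rightarrow> real" where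
  "inv_exp p = (if p = \<infinity> then 0 else 1 / real_of_ereal p)"

definition restriction_estimate ::
  "nat \<Rightarrow> nat \<Rightarrow> ereal \<Rightarrow> ereal \<Rightarrow> (nat \<Rightarrow> nat) set \<Rightarrow> real \<Rightarrow> bool" where
  "restriction_estimate N d p q S C \<longleftrightarrow>
     S \<subseteq> ZNd N d \<and> S \<noteq> {} \<and>
     (\<forall>h :: (nat \<Rightarrow> nat) \<Rightarrow> complex.
        avg_norm q (fourier N d h) S \<le> C * (1 / real N ^ d) * lp_norm p h (ZNd N d))"

end

theory Submission
  imports Defs
begin

text \<open>Put \<open>h = f - g\<close>; it is supported on at most \<open>2|E|\<close> points and \<open>\<hat>h\<close> vanishes off \<open>S\<close>.
  Fourier inversion at a point where \<open>|h|\<close> attains its maximum \<open>M\<close>, followed by the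
  power-mean inequality and the restriction estimate, gives
  \<open>M \<le> \<Sum>\<^sub>m\<^sub>\<in>\<^sub>S |\<hat>h(m)| \<le> |S| C N\<^sup>-\<^sup>d \<parallel>h\<parallel>\<^sub>p \<le> |S| C N\<^sup>-\<^sup>d (2|E|)\<^sup>1\<^sup>/\<^sup>p M\<close>,
  and the hypothesis makes the last factor smaller than \<open>1\<close>, so \<open>M = 0\<close>.\<close>

lemma chi_add: "chi N (a + b) = chi N a * chi N b"
  unfolding chi_def by (simp add: distrib_left distrib_right add_divide_distrib exp_add)

lemma chi_diff: "chi N (a - b) = chi N a * chi N (- b)"
  using chi_add[of N a "- b"] by simp

lemma norm_chi [simp]: "norm (chi N t) = 1"
  unfolding chi_def by simp

lemma chi_mult_of_nat: "chi N (a * int k) = chi N a ^ k"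
proof -
  have "chi N (a * int k) = exp (of_nat k * (2 * of_real pi * \<i> * of_int a / of_nat N))"
    unfolding chi_def by (simp add: algebra_simps)
  thus ?thesis unfolding chi_def by (simp only: exp_of_nat_mult)
qed

lemma chi_eq_1_imp_dvd:
  assumes "N > 0" and "chi N a = 1"
  shows "int N dvd a"
proof -
  obtain n :: int where "Im (2 * of_real pi * \<i> * of_int a / of_nat N) = of_int (2*n) * pi"
    using assms(2) unfolding chi_def exp_eq_1 by blast
  hence "real_of_int a = real_of_int (n * int N)" using assms(1) by (simp add: field_simps)
  hence "a = n * int N" by (simp only: of_int_eq_iff)
  thus ?thesis by simp
qed

lemma sum_chi_geometric:
  assumes N: "N > 0" and a: "\<bar>a\<bar> < int N"
  shows "(\<Sum>k<N. chi N (a * int k)) = (if a = 0 then of_nat N else 0)"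
proof (cases "a = 0")
  case True then show ?thesis by (simp add: chi_def)
next
  case False
  have "chi N a \<noteq> 1"
    using chi_eq_1_imp_dvd[OF N] dvd_imp_le_int[OF False] a by fastforce
  moreover have "chi N a ^ N = 1"
  proof -
    have "chi N a ^ N = chi N (a * int N)" by (simp add: chi_mult_of_nat)
    also have "\<dots> = exp ((2 * of_int a * pi) * \<i>)"
      unfolding chi_def using N by (simp add: field_simps)
    also have "\<dots> = 1" by (rule exp_integer_2pi) simp
    finally show ?thesis .
  qed
  ultimately show ?thesis using False by (simp add: chi_mult_of_nat sum_gp_strict)
qed

lemma ZNd_0: "ZNd N 0 = {\<lambda>_. 0}"
  unfolding ZNd_def by auto

lemma ZNd_Suc: "ZNd N (Suc d) = (\<lambda>(y,k). y(d:=k)) ` (ZNd N d \<times> {..<N})"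
proof (intro equalityI subsetI)
  fix x assume x: "x \<in> ZNd N (Suc d)"
  have "x = (\<lambda>(y,k). y(d:=k)) (x(d:=0), x d)" by auto
  moreover have "(x(d:=0), x d) \<in> ZNd N d \<times> {..<N}" using x unfolding ZNd_def by auto
  ultimately show "x \<in> (\<lambda>(y,k). y(d:=k)) ` (ZNd N d \<times> {..<N})" by blast
qed (auto simp: ZNd_def less_Suc_eq)

lemma inj_on_ZNd_Suc: "inj_on (\<lambda>(y,k). y(d:=k)) (ZNd N d \<times> {..<N})"
proof (rule inj_onI, clarify)
  fix y k y' k' assume a: "y \<in> ZNd N d" "y' \<in> ZNd N d" "y(d := k) = y'(d := k')"
  have "y i = y' i" for i
    using fun_cong[OF a(3), of i] a(1,2) unfolding ZNd_def by (cases "i = d") auto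
  then show "y = y' \<and> k = k'" using fun_cong[OF a(3), of d] by auto
qed

lemma ZNd_eqI:
  assumes "x \<in> ZNd N d" "y \<in> ZNd N d" "\<forall>i<d. x i = y i"
  shows "x = y"
proof
  fix i show "x i = y i" using assms unfolding ZNd_def by (cases "i < d") auto
qed

lemma finite_ZNd [simp]: "finite (ZNd N d)"
  by (induction d) (simp_all add: ZNd_0 ZNd_Suc)

lemma sum_ZNd_Suc: "(\<Sum>x\<in>ZNd N (Suc d). F x) = (\<Sum>y\<in>ZNd N d. \<Sum>k<N. F (y(d:=k)))"
  unfolding ZNd_Suc sum.reindex[OF inj_on_ZNd_Suc]
  by (simp add: sum.cartesian_product split_def)

lemma dotp_fun_upd: "dotp d x (m(d:=k)) = dotp d x m"
  unfolding dotp_def by (intro sum.cong) auto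

lemma dotp_Suc: "dotp (Suc d) x m = dotp d x m + int (x d) * int (m d)"
  unfolding dotp_def by simp

lemma sum_chi_dotp_diff:
  assumes N: "N > 0" and "\<forall>i<d. x i < N" and "\<forall>i<d. y i < N"
  shows "(\<Sum>m\<in>ZNd N d. chi N (dotp d x m - dotp d y m))
           = (if \<forall>i<d. x i = y i then of_nat N ^ d else 0)"
  using assms(2,3)
proof (induction d)
  case 0 then show ?case by (simp add: ZNd_0 dotp_def chi_def)
next
  case (Suc d)
  let ?a = "int (x d) - int (y d)"
  have "x d < N" "y d < N" using Suc.prems by auto
  then have "\<bar>?a\<bar> < int N" by linarith
  have "(\<Sum>m\<in>ZNd N (Suc d). chi N (dotp (Suc d) x m - dotp (Suc d) y m))
      = (\<Sum>m\<in>ZNd N d. chi N (dotp d x m - dotp d y m)) * (\<Sum>k<N. chi N (?a * int k))"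
    unfolding sum_ZNd_Suc dotp_Suc dotp_fun_upd sum_product
    by (intro sum.cong refl) (simp add: chi_add[symmetric] algebra_simps)
  also have "\<dots> = (if \<forall>i<Suc d. x i = y i then of_nat N ^ Suc d else 0)"
    using Suc by (auto simp: sum_chi_geometric[OF N \<open>\<bar>?a\<bar> < int N\<close>] less_Suc_eq)
  finally show ?case .
qed

lemma fourier_inversion:
  assumes N: "N > 0" and x: "x \<in> ZNd N d"
  shows "h x = (\<Sum>m\<in>ZNd N d. chi N (dotp d x m) * fourier N d h m)"
proof -
  have "(\<Sum>m\<in>ZNd N d. chi N (dotp d x m) * fourier N d h m)
     = (1 / of_nat N ^ d) * (\<Sum>y\<in>ZNd N d. h y * (\<Sum>m\<in>ZNd N d. chi N (dotp d x m - dotp d y m)))"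
    unfolding fourier_def chi_diff sum_distrib_left
    by (subst sum.swap) (simp add: ac_simps)
  also have "\<dots> = (1 / of_nat N ^ d) * (\<Sum>y\<in>ZNd N d. if y = x then h x * of_nat N ^ d else 0)"
  proof -
    have "h y * (\<Sum>m\<in>ZNd N d. chi N (dotp d x m - dotp d y m))
          = (if y = x then h x * of_nat N ^ d else 0)" if y: "y \<in> ZNd N d" for y
    proof -
      have "(\<forall>i<d. x i = y i) \<longleftrightarrow> y = x" using ZNd_eqI[OF x y] by auto
      moreover have "\<forall>i<d. x i < N" "\<forall>i<d. y i < N" using x y unfolding ZNd_def by auto
      ultimately show ?thesis by (simp add: sum_chi_dotp_diff[OF N])
    qed
    then show ?thesis by (intro arg_cong[where f="(*) _"] sum.cong refl)
  qed
  also have "\<dots> = h x" using x N by simp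
  finally show ?thesis by simp
qed

lemma fourier_diff: "fourier N d (\<lambda>x. f x - g x) m = fourier N d f m - fourier N d g m"
  unfolding fourier_def by (simp add: sum_subtractf right_diff_distrib)

lemma convex_on_powr_nonneg:
  fixes r :: real assumes r: "r \<ge> 1"
  shows "convex_on {0..} (\<lambda>x::real. x powr r)"
proof (rule convex_on_linorderI)
  fix t x y :: real
  assume t: "0 < t" "t < 1" and x: "x \<in> {0..}" and y: "y \<in> {0..}" and xy: "x < y"
  show "((1 - t) *\<^sub>R x + t *\<^sub>R y) powr r \<le> (1 - t) * x powr r + t * y powr r"
  proof (cases "x = 0")
    case True
    have "t powr r \<le> t powr 1" using t r by (intro powr_mono') auto
    then show ?thesis using True t y by (simp add: powr_mult mult_right_mono)
  next
    case False
    hence "x \<in> {0<..}" "y \<in> {0<..}" using x xy by auto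
    then show ?thesis using convex_onD[OF powr_convex[OF r]] t by simp
  qed
qed (simp add: convex_real_interval)

lemma sum_norm_le_card_mult_avg_norm:
  fixes a :: "'a \<Rightarrow> complex"
  assumes S: "finite S" "S \<noteq> {}" and q: "1 \<le> q"
  shows "(\<Sum>m\<in>S. cmod (a m)) \<le> real (card S) * avg_norm q a S"
proof (cases "q = \<infinity>")
  case True
  have "(\<Sum>m\<in>S. cmod (a m)) \<le> (\<Sum>m\<in>S. Max ((\<lambda>x. cmod (a x)) ` S))"
    using S by (intro sum_mono) auto
  then show ?thesis using True by (simp add: avg_norm_def)
next
  case False
  define r where "r = real_of_ereal q"
  have r: "r \<ge> 1" using q False unfolding r_def by (cases q) auto
  define n where "n = real (card S)"
  have n: "n > 0" using S n_def by (simp add: card_gt_0_iff)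
  define \<mu> where "\<mu> = (\<Sum>m\<in>S. (1/n) *\<^sub>R cmod (a m))"
  have "\<mu> \<ge> 0" unfolding \<mu>_def using n by (intro sum_nonneg) auto
  \<comment> \<open>Jensen's inequality for the convex function \<open>t \<mapsto> t powr r\<close> and the uniform weights \<open>1/n\<close>\<close>
  have "\<mu> powr r \<le> (\<Sum>m\<in>S. (1/n) * cmod (a m) powr r)"
    unfolding \<mu>_def
    by (rule convex_on_sum[OF S convex_on_powr_nonneg[OF r]]) (use n n_def in auto)
  then have "\<mu> \<le> (\<Sum>m\<in>S. (1/n) * cmod (a m) powr r) powr (1/r)"
    using r \<open>\<mu> \<ge> 0\<close> powr_mono2[of "1/r" "\<mu> powr r"] by (simp add: powr_powr)
  also have "\<dots> = avg_norm q a S"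
    using False unfolding avg_norm_def r_def n_def by (simp add: sum_distrib_left)
  finally have "\<mu> \<le> avg_norm q a S" .
  moreover have "(\<Sum>m\<in>S. cmod (a m)) = n * \<mu>"
    unfolding \<mu>_def using n by (simp add: sum_distrib_left)
  ultimately show ?thesis using n unfolding n_def by (simp add: mult_left_mono)
qed

lemma lp_norm_le_support_powr_mult_bound:
  fixes h :: "'a \<Rightarrow> complex"
  assumes A: "finite A" "A \<noteq> {}" and p: "1 \<le> p"
    and K: "K > 0" "real (card {x\<in>A. h x \<noteq> 0}) \<le> K"
    and M: "M \<ge> 0" "\<And>x. x \<in> A \<Longrightarrow> cmod (h x) \<le> M"
  shows "lp_norm p h A \<le> K powr inv_exp p * M"
  \<comment> \<open>\<open>K > 0\<close> is needed for \<open>p = \<infinity>\<close>, since \<open>0 powr 0 = 0\<close> in Isabelle.\<close>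
proof (cases "p = \<infinity>")
  case True
  then show ?thesis using A M K by (simp add: lp_norm_def inv_exp_def)
next
  case False
  define r where "r = real_of_ereal p"
  have r: "r \<ge> 1" using p False unfolding r_def by (cases p) auto
  define T where "T = {x\<in>A. h x \<noteq> 0}"
  have "(\<Sum>x\<in>A. cmod (h x) powr r) = (\<Sum>x\<in>T. cmod (h x) powr r)"
    unfolding T_def using A by (intro sum.mono_neutral_right) auto
  also have "\<dots> \<le> (\<Sum>x\<in>T. M powr r)"
    unfolding T_def using M r by (intro sum_mono powr_mono2) auto
  also have "\<dots> \<le> K * M powr r" using K T_def by (simp add: mult_right_mono)
  finally have "(\<Sum>x\<in>A. cmod (h x) powr r) \<le> K * M powr r" .
  then have "(\<Sum>x\<in>A. cmod (h x) powr r) powr (1/r) \<le> (K * M powr r) powr (1/r)"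
    using r by (intro powr_mono2) (auto intro: sum_nonneg)
  then have "lp_norm p h A \<le> (K * M powr r) powr (1/r)"
    using False unfolding lp_norm_def r_def by simp
  also have "\<dots> = K powr inv_exp p * M"
    using r M K False unfolding inv_exp_def r_def by (simp add: powr_mult powr_powr)
  finally show ?thesis .
qed

lemma restriction_estimate_sparse_fourier_eq_zero:
  assumes N: "N > 0" and est: "restriction_estimate N d p q S C"
    and p: "1 \<le> p" "p \<le> q" and C: "C \<ge> 0"
    and vanish: "\<forall>m\<in>ZNd N d - S. fourier N d h m = 0"
    and sparse: "real (card {x\<in>ZNd N d. h x \<noteq> 0}) \<le> K"
    and small: "K powr inv_exp p * real (card S) * C < real N ^ d"
    and x0: "x0 \<in> ZNd N d"
  shows "h x0 = 0"
proof (rule ccontr)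
  assume "h x0 \<noteq> 0"
  have S: "S \<subseteq> ZNd N d" "S \<noteq> {}"
    using est unfolding restriction_estimate_def by auto
  have "finite S" using finite_subset[OF S(1)] by simp
  have "ZNd N d \<noteq> {}" using x0 by auto
  have "real (card {x\<in>ZNd N d. h x \<noteq> 0}) > 0"
    using x0 \<open>h x0 \<noteq> 0\<close> by (auto simp: card_gt_0_iff)
  then have "K > 0" using sparse by linarith
  define M where "M = Max ((\<lambda>x. cmod (h x)) ` ZNd N d)"
  have bound: "cmod (h x) \<le> M" if "x \<in> ZNd N d" for x unfolding M_def using that by auto
  have "M \<in> (\<lambda>x. cmod (h x)) ` ZNd N d"
    unfolding M_def using \<open>ZNd N d \<noteq> {}\<close> by (intro Max_in) auto
  then obtain xm where "xm \<in> ZNd N d" "cmod (h xm) = M" by auto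
  have "M > 0" using bound[OF x0] \<open>h x0 \<noteq> 0\<close> by (meson less_le_trans zero_less_norm_iff)
  have "M = cmod (\<Sum>m\<in>ZNd N d. chi N (dotp d xm m) * fourier N d h m)"
    using fourier_inversion[OF N \<open>xm \<in> ZNd N d\<close>] \<open>cmod (h xm) = M\<close> by simp
  also have "\<dots> = cmod (\<Sum>m\<in>S. chi N (dotp d xm m) * fourier N d h m)"
    using S vanish by (intro arg_cong[where f=cmod] sum.mono_neutral_right) auto
  also have "\<dots> \<le> (\<Sum>m\<in>S. cmod (fourier N d h m))"
    using norm_sum[of "\<lambda>m. chi N (dotp d xm m) * fourier N d h m" S] by (simp add: norm_mult)
  also have "\<dots> \<le> real (card S) * avg_norm q (fourier N d h) S"
    using S \<open>finite S\<close> p by (intro sum_norm_le_card_mult_avg_norm) auto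
  also have "\<dots> \<le> real (card S) * (C / real N ^ d * lp_norm p h (ZNd N d))"
    using est unfolding restriction_estimate_def by (intro mult_left_mono) auto
  also have "\<dots> \<le> real (card S) * (C / real N ^ d * (K powr inv_exp p * M))"
    using lp_norm_le_support_powr_mult_bound[OF _ \<open>ZNd N d \<noteq> {}\<close> p(1) \<open>K > 0\<close> sparse _ bound]
      \<open>M > 0\<close> C by (intro mult_left_mono) auto
  also have "\<dots> = (K powr inv_exp p * real (card S) * C) / real N ^ d * M"
    by simp
  also have "\<dots> < M"
    using small \<open>M > 0\<close> N by (simp add: field_simps)
  finally show False by simp
qed

theorem corollary4:
  fixes N d :: nat and p q :: ereal and S E :: "(nat \<Rightarrow> nat) set"
    and C :: real and f :: "(nat \<Rightarrow> nat) \<Rightarrow> complex"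
  assumes "N \<ge> 2" and "d \<ge> 1"
    and "1 \<le> p" and "p \<le> q"
    and "S \<subseteq> ZNd N d" and "S \<noteq> {}"
    and "C > 0" and "restriction_estimate N d p q S C"
    and "E \<subseteq> ZNd N d" and "\<forall>x\<in>ZNd N d. x \<notin> E \<longrightarrow> f x = 0"
    and "real (card E) powr inv_exp p * real (card S)
           < real N ^ d / (2 powr inv_exp p * C)"
  shows "\<forall>g :: (nat \<Rightarrow> nat) \<Rightarrow> complex.
           card {x\<in>ZNd N d. g x \<noteq> 0} \<le> card E \<longrightarrow>
           (\<forall>m\<in>ZNd N d - S. fourier N d g m = fourier N d f m) \<longrightarrow>
           (\<forall>x\<in>ZNd N d. g x = f x)"
proof (intro allI impI ballI)
  fix g :: "(nat \<Rightarrow> nat) \<Rightarrow> complex" and x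
  assume g: "card {x\<in>ZNd N d. g x \<noteq> 0} \<le> card E"
    and fourier_eq: "\<forall>m\<in>ZNd N d - S. fourier N d g m = fourier N d f m"
    and x: "x \<in> ZNd N d"
  define h where "h = (\<lambda>x. f x - g x)"
  have "finite E" using finite_subset[OF assms(9)] by simp
  have "card {x\<in>ZNd N d. h x \<noteq> 0} \<le> card ({x\<in>ZNd N d. g x \<noteq> 0} \<union> E)"
    using assms(10) \<open>finite E\<close> unfolding h_def by (intro card_mono) auto
  also have "\<dots> \<le> card {x\<in>ZNd N d. g x \<noteq> 0} + card E" by (rule card_Un_le)
  finally have sparse: "real (card {x\<in>ZNd N d. h x \<noteq> 0}) \<le> 2 * real (card E)"
    using g by linarith
  have small: "(2 * real (card E)) powr inv_exp p * real (card S) * C < real N ^ d"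
    using assms(7,11) by (simp add: powr_mult pos_less_divide_eq mult_ac)
  have "\<forall>m\<in>ZNd N d - S. fourier N d h m = 0"
    using fourier_eq unfolding h_def fourier_diff by simp
  then have "h x = 0"
    using restriction_estimate_sparse_fourier_eq_zero[OF _ assms(8,3,4) _ _ sparse small x] assms(1,7)
    by simp
  then show "g x = f x" unfolding h_def by simp
qed

end
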